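(* Let $m\ge 2$ and let $T$ be any hierarchy of size $m$. Let $H(x)=\sum_{n\ge1}H_nx^n$, where $H_n$ is the number of isomorphism classes of hierarchies of size $n$, and let $H^{(m)}(x)=\sum_{n\ge1}H^{(m)}_nx^n$, where $H^{(m)}_n$ is the number of isomorphism classes of hierarchies of size $n$ that do not contain a subhierarchy isomorphic to $T$. Then the radius of convergence of $H^{(m)}(x)$ is strictly larger than the radius of convergence of $H(x)$.
   Context: A hierarchy is a finite rooted unordered tree in which no vertex has exactly one child; its size is its number of leaves. For a vertex $v$ of a hierarchy, the subhierarchy at $v$ is the hierarchy induced by $v$ and all its descendants (with root $v$); a hierarchy contains $T$ as a subhierarchy if the subhierarchy at some vertex (possibly the root) is isomorphic to $T$ as a rooted tree. *)

theory Defs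
  imports "HOL-Analysis.Analysis" "HOL-Library.Multiset"
begin

text \<open>Finite rooted unordered trees, up to isomorphism: a vertex is given by the
multiset of (isomorphism classes of) subtrees at its children. Two such values are
equal iff the corresponding rooted trees are isomorphic.\<close>

datatype tree = Node "tree multiset"

primrec children :: "tree \<Rightarrow> tree multiset" where
  "children (Node M) = M"

primrec leaves :: "tree \<Rightarrow> nat" where
  "leaves (Node M) = (if M = {#} then 1 else sum_mset (image_mset leaves M))"

inductive subtree_of :: "tree \<Rightarrow> tree \<Rightarrow> bool" where
  refl: "subtree_of t t"
| step: "s \<in># M \<Longrightarrow> subtree_of t s \<Longrightarrow> subtree_of t (Node M)"

definition hierarchy :: "tree \<Rightarrow> bool" where
  "hierarchy t \<longleftrightarrow> (\<forall>s. subtree_of s t \<longrightarrow> size (children s) \<noteq> 1)"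

definition contains_sub :: "tree \<Rightarrow> tree \<Rightarrow> bool" where
  "contains_sub t T \<longleftrightarrow> subtree_of T t"

definition H :: "nat \<Rightarrow> nat" where
  "H n = card {t. hierarchy t \<and> leaves t = n}"

definition H_avoid :: "tree \<Rightarrow> nat \<Rightarrow> nat" where
  "H_avoid T n = card {t. hierarchy t \<and> leaves t = n \<and> \<not> contains_sub t T}"

end

theory Submission
  imports Defs
begin

(* A hierarchy is a leaf or a multiset of at least two hierarchies, so with
   L(z) = -ln(1 - z) - z = sum_{k>=2} z^k/k and R(x) = sum_t L(x^|t|) the multiset
   construction gives 2 H(x) = x + exp (H(x) + R(x)) - 1. As exp u >= 2 (1 + u - ln 2),
   this forces x + 2 R(x) <= 2 ln 2 - 1 below the radius rho of H, so rho < 1/2, and then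
   the truncations of H stay below ln 2 - R(x); both bounds survive at x = rho.
   For T-avoiding hierarchies the same recursion holds with an extra loss y^m, since the
   node with the children of T is forbidden. At a point y slightly beyond rho this loss
   outweighs the growth of R and of the first m coefficients of H, so the truncated
   T-avoiding sums remain bounded by ln 2 and the avoiding series converges at y > rho. *)

section \<open>Multisets of bounded multiplicity\<close>

lemma member_le_sum_mset_image: "x \<in># M \<Longrightarrow> (f x :: nat) \<le> (\<Sum>y\<in>#M. f y)"
  by (metis image_mset_add_mset insert_DiffM le_add1 sum_mset.insert)

text \<open>The multiplicity bound keeps these sets finite, so that the product formula below is an
  identity of finite sums.\<close>

definition bounded_msets :: "'a set \<Rightarrow> nat \<Rightarrow> 'a multiset set" where
  "bounded_msets S J = {M. set_mset M \<subseteq> S \<and> (\<forall>x. count M x < J)}"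

lemma bounded_msets_empty: "1 \<le> J \<Longrightarrow> bounded_msets {} J = {{#}}"
  unfolding bounded_msets_def by auto

lemma bounded_msets_insert:
  assumes "a \<notin> S"
  shows "bounded_msets (insert a S) J = (\<lambda>(M, j). M + replicate_mset j a) ` (bounded_msets S J \<times> {..<J})"
proof
  have "M + replicate_mset j a \<in> bounded_msets (insert a S) J"
    if M: "M \<in> bounded_msets S J" and "j < J" for M j
  proof -
    have "count M a = 0" using M assms by (auto simp: bounded_msets_def count_eq_zero_iff)
    with that show ?thesis
      unfolding bounded_msets_def by (auto simp: count_replicate_mset split: if_splits)
  qed
  then show "(\<lambda>(M, j). M + replicate_mset j a) ` (bounded_msets S J \<times> {..<J}) \<subseteq> bounded_msets (insert a S) J"
    by auto
  show "bounded_msets (insert a S) J \<subseteq> (\<lambda>(M, j). M + replicate_mset j a) ` (bounded_msets S J \<times> {..<J})"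
  proof
    fix M' assume M': "M' \<in> bounded_msets (insert a S) J"
    define M where "M = filter_mset (\<lambda>x. x \<noteq> a) M'"
    have "M' = M + replicate_mset (count M' a) a"
      unfolding M_def by (rule multiset_eqI) (auto simp: count_replicate_mset)
    moreover have "M \<in> bounded_msets S J" "count M' a \<in> {..<J}"
      using M' unfolding M_def bounded_msets_def by auto
    ultimately show "M' \<in> (\<lambda>(M, j). M + replicate_mset j a) ` (bounded_msets S J \<times> {..<J})"
      by force
  qed
qed

lemma inj_on_add_replicate_mset:
  assumes "a \<notin> S"
  shows "inj_on (\<lambda>(M, j). M + replicate_mset j a) (bounded_msets S J \<times> {..<J})"
proof (rule inj_onI, clarify)
  fix M1 j1 M2 j2
  assume "M1 \<in> bounded_msets S J" "M2 \<in> bounded_msets S J"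
    and eq: "M1 + replicate_mset j1 a = M2 + replicate_mset j2 a"
  then have "count M1 a = 0" "count M2 a = 0"
    using assms by (auto simp: bounded_msets_def count_eq_zero_iff)
  then have "j1 = j2" using arg_cong[OF eq, of "\<lambda>X. count X a"] by simp
  with eq show "M1 = M2 \<and> j1 = j2" by simp
qed

lemma finite_bounded_msets: "finite S \<Longrightarrow> finite (bounded_msets S J)"
proof (induction S rule: finite_induct)
  case empty
  have "bounded_msets {} J \<subseteq> {{#}}" by (auto simp: bounded_msets_def)
  then show ?case by (rule finite_subset) simp
qed (simp add: bounded_msets_insert)

lemma sum_prod_bounded_msets:
  fixes w :: "'a \<Rightarrow> 'b :: comm_semiring_1"
  assumes "finite S" and "1 \<le> J"
  shows "(\<Sum>M\<in>bounded_msets S J. \<Prod>x\<in>#M. w x) = (\<Prod>x\<in>S. \<Sum>j<J. w x ^ j)"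
  using assms(1)
proof (induction S rule: finite_induct)
  case empty
  then show ?case using assms(2) by (simp add: bounded_msets_empty)
next
  case (insert a S)
  have "(\<Sum>M\<in>bounded_msets (insert a S) J. \<Prod>x\<in>#M. w x)
      = (\<Sum>(M, j)\<in>bounded_msets S J \<times> {..<J}. \<Prod>x\<in>#M + replicate_mset j a. w x)"
    unfolding bounded_msets_insert[OF insert(2)]
    by (subst sum.reindex[OF inj_on_add_replicate_mset[OF insert(2)]]) (simp add: case_prod_unfold)
  also have "\<dots> = (\<Sum>(M, j)\<in>bounded_msets S J \<times> {..<J}. (\<Prod>x\<in>#M. w x) * w a ^ j)"
    by (simp add: case_prod_unfold)
  also have "\<dots> = (\<Sum>M\<in>bounded_msets S J. \<Prod>x\<in>#M. w x) * (\<Sum>j<J. w a ^ j)"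
    by (simp add: sum_product sum.cartesian_product)
  finally show ?case using insert by (simp add: mult.commute)
qed

lemma sum_prod_bounded_msets_split:
  fixes w :: "'a \<Rightarrow> 'b :: comm_semiring_1"
  assumes "finite S" and "2 \<le> J"
  shows "(\<Sum>M\<in>bounded_msets S J. \<Prod>x\<in>#M. w x)
    = 1 + (\<Sum>x\<in>S. w x) + (\<Sum>M | M \<in> bounded_msets S J \<and> 2 \<le> size M. \<Prod>x\<in>#M. w x)"
proof -
  define B where "B = {M \<in> bounded_msets S J. 2 \<le> size M}"
  have fin: "finite B" unfolding B_def using finite_bounded_msets[OF assms(1)] by auto
  have "bounded_msets S J = insert {#} ((\<lambda>x. {#x#}) ` S \<union> B)"
  proof (intro equalityI subsetI)
    fix M assume M: "M \<in> bounded_msets S J"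
    show "M \<in> insert {#} ((\<lambda>x. {#x#}) ` S \<union> B)"
    proof (cases "size M = 1")
      case True
      then obtain x where "M = {#x#}" by (metis size_1_singleton_mset)
      with M show ?thesis by (auto simp: bounded_msets_def)
    next
      case False
      with M show ?thesis by (cases "size M") (auto simp: B_def)
    qed
  qed (use assms(2) in \<open>auto simp: B_def bounded_msets_def\<close>)
  moreover have "{#} \<notin> (\<lambda>x. {#x#}) ` S \<union> B" by (auto simp: B_def)
  ultimately have "(\<Sum>M\<in>bounded_msets S J. \<Prod>x\<in>#M. w x)
      = 1 + (\<Sum>M\<in>(\<lambda>x. {#x#}) ` S \<union> B. \<Prod>x\<in>#M. w x)"
    using assms(1) fin by simp
  also have "(\<Sum>M\<in>(\<lambda>x. {#x#}) ` S \<union> B. \<Prod>x\<in>#M. w x)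
      = (\<Sum>M\<in>(\<lambda>x. {#x#}) ` S. \<Prod>x\<in>#M. w x) + (\<Sum>M\<in>B. \<Prod>x\<in>#M. w x)"
    using assms(1) fin by (intro sum.union_disjoint) (auto simp: B_def)
  also have "(\<Sum>M\<in>(\<lambda>x. {#x#}) ` S. \<Prod>x\<in>#M. w x) = (\<Sum>x\<in>S. w x)"
    by (subst sum.reindex) (auto intro: inj_onI)
  finally show ?thesis by (simp add: B_def add.assoc)
qed

section \<open>The logarithmic tail\<close>

text \<open>For \<open>|z| < 1\<close> this is \<open>\<Sum>k\<ge>2. z^k / k\<close>. At \<open>z = 1\<close> it takes the junk value \<open>-1\<close>
  (as \<open>ln 0 = 0\<close>); this value only ever occurs multiplied by \<open>H 0 = 0\<close>.\<close>

definition log_tail :: "real \<Rightarrow> real" where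
  "log_tail z = - ln (1 - z) - z"

lemma log_tail_nonneg: "0 \<le> z \<Longrightarrow> z < 1 \<Longrightarrow> 0 \<le> log_tail z"
  unfolding log_tail_def using ln_le_minus_one[of "1 - z"] by simp

lemma log_tail_le_square: "0 \<le> z \<Longrightarrow> z \<le> 1/2 \<Longrightarrow> log_tail z \<le> 2 * z\<^sup>2"
  using ln_one_minus_pos_lower_bound[of z] by (simp add: log_tail_def)

lemma log_tail_diff_le:
  assumes "0 \<le> a" "a \<le> b" "b \<le> 1/2"
  shows "log_tail b - log_tail a \<le> 2 * (b\<^sup>2 - a\<^sup>2)"
proof -
  have "ln (1 - a) - ln (1 - b) = ln ((1 - a) / (1 - b))"
    using assms by (simp add: ln_div)
  also have "(1 - a) / (1 - b) = 1 + (b - a) / (1 - b)"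
    using assms by (simp add: field_simps)
  also have "ln (1 + (b - a) / (1 - b)) \<le> (b - a) / (1 - b)"
    using assms by (intro ln_add_one_self_le_self) simp
  finally have ln_diff: "ln (1 - a) - ln (1 - b) \<le> (b - a) / (1 - b)" .
  have "(b - a) / (1 - b) - (b - a) = (b - a) * b / (1 - b)"
    using assms by (simp add: field_simps)
  also have "\<dots> \<le> (b - a) * b / (1/2)"
    using assms by (intro divide_left_mono) auto
  also have "\<dots> \<le> 2 * (b\<^sup>2 - a\<^sup>2)"
  proof -
    have "0 \<le> (b - a) * a" using assms by simp
    then show ?thesis by (simp add: power2_eq_square algebra_simps)
  qed
  finally show ?thesis using ln_diff unfolding log_tail_def by linarith
qed

lemma tendsto_log_tail_power:
  assumes "(f \<longlongrightarrow> q) F" and "0 \<le> q" "q < 1"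
  shows "((\<lambda>x. log_tail (f x ^ n)) \<longlongrightarrow> log_tail (q ^ n)) F"
proof (cases "n = 0")
  case False
  then have "q ^ n < 1" using assms by (simp add: power_less_one_iff)
  then show ?thesis unfolding log_tail_def by (intro tendsto_intros assms) auto
qed simp

lemma exp_add_log_tail: "z < 1 \<Longrightarrow> exp (z + log_tail z) = 1 / (1 - z)"
  unfolding log_tail_def by (simp add: exp_minus inverse_eq_divide)

lemma prod_inverse_one_minus_eq_exp:
  assumes "finite S" and "\<And>x. x \<in> S \<Longrightarrow> w x < 1"
  shows "(\<Prod>x\<in>S. 1 / (1 - w x)) = exp (\<Sum>x\<in>S. w x + log_tail (w x))"
  using assms by (simp add: exp_sum exp_add_log_tail)

lemma sum_geometric_le: "0 \<le> (z::real) \<Longrightarrow> z < 1 \<Longrightarrow> (\<Sum>j<J. z ^ j) \<le> 1 / (1 - z)"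
  by (simp add: sum_gp_strict divide_right_mono)

lemma sum_prod_bounded_msets_size_ge_2_le:
  assumes "finite S" and "2 \<le> J" and "\<And>x. x \<in> S \<Longrightarrow> 0 \<le> w x \<and> w x < 1"
  shows "(\<Sum>M | M \<in> bounded_msets S J \<and> 2 \<le> size M. \<Prod>x\<in>#M. w x)
    \<le> exp (\<Sum>x\<in>S. w x + log_tail (w x)) - 1 - (\<Sum>x\<in>S. w x)"
proof -
  have "(\<Sum>M\<in>bounded_msets S J. \<Prod>x\<in>#M. w x) = (\<Prod>x\<in>S. \<Sum>j<J. w x ^ j)"
    using assms(2) by (intro sum_prod_bounded_msets[OF assms(1)]) simp
  also have "\<dots> \<le> (\<Prod>x\<in>S. 1 / (1 - w x))"
    using assms(3) by (intro prod_mono) (auto intro: sum_geometric_le sum_nonneg)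
  also have "\<dots> = exp (\<Sum>x\<in>S. w x + log_tail (w x))"
    using assms by (intro prod_inverse_one_minus_eq_exp) auto
  finally show ?thesis using sum_prod_bounded_msets_split[OF assms(1,2), of w] by simp
qed

section \<open>Hierarchies\<close>

definition leaf :: tree where
  "leaf = Node {#}"

lemma Node_children [simp]: "Node (children t) = t"
  by (cases t) simp

lemma one_le_leaves: "1 \<le> leaves t"
proof (induction t)
  case (Node M)
  show ?case
  proof (cases "M = {#}")
    case False
    then obtain x where "x \<in># M" by blast
    with Node.IH[OF this] member_le_sum_mset_image[OF this, of leaves] False
    show ?thesis by simp
  qed simp
qed

lemma size_le_leaves: "size M \<le> leaves (Node M)"
proof (cases "M = {#}")
  case False
  have "size M = (\<Sum>x\<in>#M. 1)" by (rule size_eq_sum_mset)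
  also have "\<dots> \<le> (\<Sum>x\<in>#M. leaves x)" by (rule sum_mset_mono) (rule one_le_leaves)
  finally show ?thesis using False by simp
qed simp

lemma count_le_leaves: "count M x \<le> leaves (Node M)"
  using count_le_size[of M x] size_le_leaves[of M] by linarith

lemma leaves_child_less:
  assumes "2 \<le> size M" and "x \<in># M"
  shows "leaves x < leaves (Node M)"
proof -
  obtain M' where M: "M = add_mset x M'" using assms(2) by (metis insert_DiffM)
  then obtain y where "y \<in># M'" using assms(1) by fastforce
  have "1 \<le> leaves y" by (rule one_le_leaves)
  also have "leaves y \<le> (\<Sum>z\<in>#M'. leaves z)" using \<open>y \<in># M'\<close> by (rule member_le_sum_mset_image)
  finally show ?thesis using M by simp
qed

lemma subtree_of_Node_iff:
  "subtree_of s (Node M) \<longleftrightarrow> s = Node M \<or> (\<exists>x\<in>#M. subtree_of s x)"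
  by (subst subtree_of.simps) auto

lemma leaves_le_if_subtree_of: "subtree_of s t \<Longrightarrow> leaves s \<le> leaves t"
proof (induction rule: subtree_of.induct)
  case (step s M t)
  then have "leaves s \<le> leaves (Node M)"
    using member_le_sum_mset_image[OF step(1), of leaves] by auto
  with step.IH show ?case by simp
qed simp

lemma hierarchy_Node_iff: "hierarchy (Node M) \<longleftrightarrow> size M \<noteq> 1 \<and> (\<forall>x\<in>#M. hierarchy x)"
  unfolding hierarchy_def
  by (metis children.simps subtree_of.step subtree_of.refl subtree_of_Node_iff)

lemma two_le_size_if_hierarchy: "hierarchy (Node M) \<Longrightarrow> M \<noteq> {#} \<Longrightarrow> 2 \<le> size M"
  by (cases "size M") (auto simp: hierarchy_Node_iff)

lemma hierarchy_leaves_eq_1: "hierarchy t \<Longrightarrow> leaves t = 1 \<Longrightarrow> t = leaf"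
proof (cases t)
  case (Node M)
  assume "hierarchy t" "leaves t = 1"
  with Node show ?thesis
    using two_le_size_if_hierarchy[of M] size_le_leaves[of M] by (cases "M = {#}") (auto simp: leaf_def)
qed

definition hereditary :: "(tree \<Rightarrow> bool) \<Rightarrow> bool" where
  "hereditary P \<longleftrightarrow> (\<forall>t. P t \<longrightarrow> hierarchy t) \<and> (\<forall>M x. P (Node M) \<longrightarrow> x \<in># M \<longrightarrow> P x)"

lemma hereditary_hierarchy: "hereditary hierarchy"
  by (simp add: hereditary_def hierarchy_Node_iff)

lemma hereditary_avoiding: "hereditary (\<lambda>t. hierarchy t \<and> \<not> contains_sub t T)"
  unfolding hereditary_def contains_sub_def by (auto simp: hierarchy_Node_iff intro: subtree_of.step)

definition trees_below :: "(tree \<Rightarrow> bool) \<Rightarrow> nat \<Rightarrow> tree set" where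
  "trees_below P N = {t. P t \<and> leaves t < N}"

lemma trees_below_mono: "(\<And>t. P t \<Longrightarrow> Q t) \<Longrightarrow> N \<le> N' \<Longrightarrow> trees_below P N \<subseteq> trees_below Q N'"
  unfolding trees_below_def by auto

lemma trees_below_Suc_subset:
  assumes "hereditary P"
  shows "trees_below P (Suc N)
    \<subseteq> insert leaf (Node ` {M \<in> bounded_msets (trees_below P N) (N + 2). 2 \<le> size M \<and> P (Node M)})"
proof
  fix t assume "t \<in> trees_below P (Suc N)"
  then have t: "P t" "hierarchy t" "leaves t \<le> N"
    using assms by (auto simp: trees_below_def hereditary_def)
  show "t \<in> insert leaf (Node ` {M \<in> bounded_msets (trees_below P N) (N + 2). 2 \<le> size M \<and> P (Node M)})"
  proof (cases "leaves t = 1")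
    case True
    with t show ?thesis by (simp add: hierarchy_leaves_eq_1)
  next
    case False
    define M where "M = children t"
    have t_eq: "t = Node M" by (simp add: M_def)
    with False have "M \<noteq> {#}" by auto
    with t t_eq have size_M: "2 \<le> size M" by (simp add: two_le_size_if_hierarchy)
    have "x \<in> trees_below P N" if "x \<in># M" for x
      using assms t t_eq that leaves_child_less[OF size_M that]
      by (auto simp: trees_below_def hereditary_def)
    moreover have "count M x < N + 2" for x
      using count_le_leaves[of M x] t t_eq by simp
    ultimately have "M \<in> bounded_msets (trees_below P N) (N + 2)"
      by (auto simp: bounded_msets_def)
    with size_M t t_eq show ?thesis by blast
  qed
qed

lemma finite_trees_below: "hereditary P \<Longrightarrow> finite (trees_below P N)"
proof (induction N)
  case 0
  then show ?case by (simp add: trees_below_def)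
next
  case (Suc N)
  then have "finite (bounded_msets (trees_below P N) (N + 2))"
    by (simp add: finite_bounded_msets)
  then show ?case
    by (intro finite_subset[OF trees_below_Suc_subset[OF Suc.prems]]) (simp add: finite_imageI)
qed

lemma sum_trees_below_by_leaves:
  assumes "hereditary P"
  shows "(\<Sum>t\<in>trees_below P N. g (leaves t)) = (\<Sum>n<N. real (card {t. P t \<and> leaves t = n}) * g n)"
proof -
  have "(\<Sum>t\<in>trees_below P N. g (leaves t))
      = (\<Sum>n<N. \<Sum>t | t \<in> trees_below P N \<and> leaves t = n. g (leaves t))"
    using finite_trees_below[OF assms] by (rule sum.group[symmetric]) (auto simp: trees_below_def)
  also have "\<dots> = (\<Sum>n<N. real (card {t. P t \<and> leaves t = n}) * g n)"
    by (intro sum.cong) (auto simp: trees_below_def intro!: arg_cong[where f = card])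
  finally show ?thesis .
qed

section \<open>Truncated generating sums\<close>

definition tree_sum :: "(tree \<Rightarrow> bool) \<Rightarrow> nat \<Rightarrow> real \<Rightarrow> real" where
  "tree_sum P N y = (\<Sum>t\<in>trees_below P N. y ^ leaves t)"

definition log_tail_sum :: "(tree \<Rightarrow> bool) \<Rightarrow> nat \<Rightarrow> real \<Rightarrow> real" where
  "log_tail_sum P N y = (\<Sum>t\<in>trees_below P N. log_tail (y ^ leaves t))"

lemma power_leaves_less_1: "0 \<le> (y::real) \<Longrightarrow> y < 1 \<Longrightarrow> y ^ leaves t < 1"
  using one_le_leaves[of t] by (simp add: power_less_one_iff[of y])

lemma tree_sum_0 [simp]: "tree_sum P 0 y = 0"
  by (simp add: tree_sum_def trees_below_def)

lemma tree_sum_nonneg: "0 \<le> y \<Longrightarrow> 0 \<le> tree_sum P N y"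
  by (simp add: tree_sum_def sum_nonneg)

lemma tree_sum_mono:
  "hereditary Q \<Longrightarrow> (\<And>t. P t \<Longrightarrow> Q t) \<Longrightarrow> N \<le> N' \<Longrightarrow> 0 \<le> y
    \<Longrightarrow> tree_sum P N y \<le> tree_sum Q N' y"
  unfolding tree_sum_def by (intro sum_mono2 finite_trees_below trees_below_mono) auto

lemma log_tail_sum_mono:
  "hereditary Q \<Longrightarrow> (\<And>t. P t \<Longrightarrow> Q t) \<Longrightarrow> N \<le> N' \<Longrightarrow> 0 \<le> y \<Longrightarrow> y < 1
    \<Longrightarrow> log_tail_sum P N y \<le> log_tail_sum Q N' y"
  unfolding log_tail_sum_def
  by (intro sum_mono2 finite_trees_below trees_below_mono log_tail_nonneg power_leaves_less_1) auto

lemma prod_power_leaves: "(\<Prod>t\<in>#M. y ^ leaves t) = y ^ (\<Sum>t\<in>#M. leaves t)"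
  by (induction M) (simp_all add: power_add)

lemma power_leaves_Node: "M \<noteq> {#} \<Longrightarrow> y ^ leaves (Node M) = (\<Prod>t\<in>#M. y ^ leaves t)"
  by (simp add: prod_power_leaves)

text \<open>A tree in \<open>trees_below P (Suc N)\<close> is a leaf or a node whose children form a multiset of
  size at least two over \<open>trees_below P N\<close>; the multisets in \<open>E\<close> are counted by the exponential
  bound but are not nodes in \<open>P\<close>.\<close>

lemma tree_sum_Suc_le:
  assumes "hereditary P" and "0 \<le> y" "y < 1"
    and E: "E \<subseteq> {M \<in> bounded_msets (trees_below P N) (N + 2). 2 \<le> size M \<and> \<not> P (Node M)}"
  shows "tree_sum P (Suc N) y
    \<le> y + exp (tree_sum P N y + log_tail_sum P N y) - 1 - tree_sum P N y - (\<Sum>M\<in>E. y ^ leaves (Node M))"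
proof -
  define S where "S = trees_below P N"
  define F where "F = {M \<in> bounded_msets S (N + 2). 2 \<le> size M \<and> P (Node M)}"
  have fin_S: "finite S" unfolding S_def by (rule finite_trees_below[OF assms(1)])
  have fin: "finite F" "finite E"
    using finite_bounded_msets[OF fin_S] E unfolding F_def S_def by (auto intro: finite_subset)
  have weight: "y ^ leaves (Node M) = (\<Prod>t\<in>#M. y ^ leaves t)" if "M \<in> F \<union> E" for M
    using that E by (auto simp: F_def S_def prod_power_leaves)
  have "(\<Sum>M\<in>F. y ^ leaves (Node M)) + (\<Sum>M\<in>E. y ^ leaves (Node M))
      = (\<Sum>M\<in>F \<union> E. y ^ leaves (Node M))"
    using fin E by (intro sum.union_disjoint[symmetric]) (auto simp: F_def S_def)
  also have "\<dots> = (\<Sum>M\<in>F \<union> E. \<Prod>t\<in>#M. y ^ leaves t)"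
    by (rule sum.cong[OF HOL.refl weight])
  also have "\<dots> \<le> (\<Sum>M | M \<in> bounded_msets S (N + 2) \<and> 2 \<le> size M. \<Prod>t\<in>#M. y ^ leaves t)"
    using E assms(2) finite_bounded_msets[OF fin_S]
    by (intro sum_mono2) (auto simp: F_def S_def prod_power_leaves)
  also have "\<dots> \<le> exp (tree_sum P N y + log_tail_sum P N y) - 1 - tree_sum P N y"
    using sum_prod_bounded_msets_size_ge_2_le[OF fin_S, of "N + 2" "\<lambda>t. y ^ leaves t"] assms(2,3)
    by (simp add: power_leaves_less_1 tree_sum_def log_tail_sum_def S_def sum.distrib)
  finally have F_bound: "(\<Sum>M\<in>F. y ^ leaves (Node M))
      \<le> exp (tree_sum P N y + log_tail_sum P N y) - 1 - tree_sum P N y - (\<Sum>M\<in>E. y ^ leaves (Node M))"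
    by simp
  have "tree_sum P (Suc N) y \<le> (\<Sum>t\<in>insert leaf (Node ` F). y ^ leaves t)"
    unfolding tree_sum_def using trees_below_Suc_subset[OF assms(1)] fin assms(2)
    by (intro sum_mono2) (auto simp: F_def S_def)
  also have "\<dots> \<le> y + (\<Sum>M\<in>F. y ^ leaves (Node M))"
    using fin assms(2) by (simp add: sum.insert_if sum.reindex inj_on_def leaf_def sum_nonneg)
  finally show ?thesis using F_bound by simp
qed

lemma exp_add_minus_mono:
  fixes u v R :: real
  assumes "0 \<le> u" "u \<le> v" "0 \<le> R"
  shows "exp (u + R) - u \<le> exp (v + R) - v"
proof -
  have "exp (u + R) * (1 + (v - u)) \<le> exp (u + R) * exp (v - u)"
    by (intro mult_left_mono exp_ge_add_one_self) simp
  also have "\<dots> = exp (v + R)" by (simp flip: exp_add)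
  finally have "exp (u + R) + exp (u + R) * (v - u) \<le> exp (v + R)" by (simp add: algebra_simps)
  moreover have "v - u \<le> exp (u + R) * (v - u)"
    using assms mult_right_mono[of 1 "exp (u + R)" "v - u"] by simp
  ultimately show ?thesis by linarith
qed

lemma bounded_by_recursion:
  fixes f :: "nat \<Rightarrow> real"
  assumes recursion: "\<And>N. K \<le> N \<Longrightarrow> f N \<le> B \<Longrightarrow> f (Suc N) \<le> a + exp (f N + R) - 1 - f N"
    and nonneg: "\<And>N. 0 \<le> f N" and "0 \<le> R"
    and start: "f K \<le> B" and fixpoint: "a + exp (B + R) - 1 - B \<le> B"
    and "K \<le> N"
  shows "f N \<le> B"
  using \<open>K \<le> N\<close>
proof (induction rule: dec_induct)
  case base
  show ?case by (rule start)
next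
  case (step n)
  have "f (Suc n) \<le> a + exp (f n + R) - 1 - f n"
    using recursion step by blast
  also have "\<dots> \<le> a + exp (B + R) - 1 - B"
    using exp_add_minus_mono[of "f n" B R] nonneg step.IH \<open>0 \<le> R\<close> by simp
  finally show ?case using fixpoint by simp
qed

section \<open>The radius of convergence of the hierarchy series\<close>

lemma H_0: "H 0 = 0"
proof -
  have "{t. hierarchy t \<and> leaves t = 0} = {}"
    using one_le_leaves by (metis (mono_tags, lifting) Collect_empty_eq not_one_le_zero)
  then show ?thesis unfolding H_def by (metis card.empty)
qed

lemma H_pos: "hierarchy t \<Longrightarrow> 0 < H (leaves t)"
proof -
  assume "hierarchy t"
  moreover have "finite {s. hierarchy s \<and> leaves s = leaves t}"
    by (rule finite_subset[OF _ finite_trees_below[OF hereditary_hierarchy, of "Suc (leaves t)"]])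
      (auto simp: trees_below_def)
  ultimately show ?thesis unfolding H_def by (subst card_gt_0_iff) auto
qed

lemma tree_sum_hierarchy: "tree_sum hierarchy N x = (\<Sum>n<N. real (H n) * x ^ n)"
  unfolding tree_sum_def H_def by (rule sum_trees_below_by_leaves[OF hereditary_hierarchy])

lemma log_tail_sum_hierarchy: "log_tail_sum hierarchy N x = (\<Sum>n<N. real (H n) * log_tail (x ^ n))"
  unfolding log_tail_sum_def H_def by (rule sum_trees_below_by_leaves[OF hereditary_hierarchy])

lemma H_log_tail_nonneg: "0 \<le> x \<Longrightarrow> x < 1 \<Longrightarrow> 0 \<le> real (H n) * log_tail (x ^ n)"
  by (cases "n = 0") (simp_all add: H_0 log_tail_nonneg power_less_one_iff)

lemma tree_sum_hierarchy_1_20_le: "tree_sum hierarchy N (1/20) \<le> 1/10"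
proof -
  have "exp (11/100::real) \<le> 1 + 11/100 + (11/100)\<^sup>2" by (rule exp_bound) simp_all
  then have fixpoint: "1/20 + exp (1/10 + 1/100) - 1 - 1/10 \<le> (1/10::real)"
    by (simp add: power2_eq_square)
  show ?thesis
  proof (rule bounded_by_recursion[where K = 0 and f = "\<lambda>N. tree_sum hierarchy N (1/20)"
        and a = "1/20" and R = "1/100" and B = "1/10"])
    show "tree_sum hierarchy (Suc N) (1/20)
        \<le> 1/20 + exp (tree_sum hierarchy N (1/20) + 1/100) - 1 - tree_sum hierarchy N (1/20)"
      if IH: "tree_sum hierarchy N (1/20) \<le> 1/10" for N
    proof -
      have "log_tail_sum hierarchy N (1/20) \<le> (\<Sum>t\<in>trees_below hierarchy N. (1/10) * (1/20) ^ leaves t)"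
        unfolding log_tail_sum_def
      proof (rule sum_mono)
        fix t
        have small: "(1/20::real) ^ leaves t \<le> (1/20) ^ 1"
          by (rule power_decreasing[OF one_le_leaves]) simp_all
        then have "2 * ((1/20::real) ^ leaves t)\<^sup>2 \<le> (1/10) * (1/20) ^ leaves t"
          by (simp add: power2_eq_square)
        with small show "log_tail ((1/20) ^ leaves t) \<le> (1/10) * (1/20) ^ leaves t"
          using log_tail_le_square[of "(1/20) ^ leaves t"] by simp
      qed
      also have "\<dots> = (1/10) * tree_sum hierarchy N (1/20)"
        by (simp add: tree_sum_def sum_distrib_left)
      also have "\<dots> \<le> 1/100"
        using IH by simp
      finally have "exp (tree_sum hierarchy N (1/20) + log_tail_sum hierarchy N (1/20))
          \<le> exp (tree_sum hierarchy N (1/20) + 1/100)" by simp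
      moreover have "tree_sum hierarchy (Suc N) (1/20) \<le> 1/20
          + exp (tree_sum hierarchy N (1/20) + log_tail_sum hierarchy N (1/20)) - 1 - tree_sum hierarchy N (1/20)"
        using tree_sum_Suc_le[OF hereditary_hierarchy, of "1/20" "{}" N] by simp
      ultimately show ?thesis by linarith
    qed
  qed (use fixpoint in \<open>simp_all add: tree_sum_nonneg\<close>)
qed

lemma conv_radius_H_ge: "ereal (1/20) \<le> conv_radius (\<lambda>n. real (H n))"
proof -
  have "summable (\<lambda>n. real (H n) * (1/20) ^ n)"
    by (rule summableI_nonneg_bounded[where x = "1/10"])
      (use tree_sum_hierarchy_1_20_le in \<open>simp_all add: tree_sum_hierarchy\<close>)
  from conv_radius_geI[OF this] show ?thesis by simp
qed

lemma sum_hierarchies_le_suminf: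
  assumes "finite A" and "\<And>t. t \<in> A \<Longrightarrow> hierarchy t"
    and "0 \<le> x" and "summable (\<lambda>n. real (H n) * x ^ n)"
  shows "(\<Sum>t\<in>A. x ^ leaves t) \<le> (\<Sum>n. real (H n) * x ^ n)"
proof -
  have "A \<subseteq> trees_below hierarchy (Suc (\<Sum>t\<in>A. leaves t))"
    using assms(1,2) member_le_sum[of _ A leaves] by (auto simp: trees_below_def less_Suc_eq_le)
  then have "(\<Sum>t\<in>A. x ^ leaves t) \<le> tree_sum hierarchy (Suc (\<Sum>t\<in>A. leaves t)) x"
    unfolding tree_sum_def using assms(3) by (intro sum_mono2 finite_trees_below hereditary_hierarchy) auto
  also have "\<dots> \<le> (\<Sum>n. real (H n) * x ^ n)"
    unfolding tree_sum_hierarchy using assms(3,4) by (intro sum_le_suminf) auto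
  finally show ?thesis .
qed

lemma exp_tree_sum_hierarchy_le:
  assumes "0 \<le> x" "x < 1" and summable: "summable (\<lambda>n. real (H n) * x ^ n)"
  shows "exp (tree_sum hierarchy N x + log_tail_sum hierarchy N x)
    \<le> 1 + 2 * (\<Sum>n. real (H n) * x ^ n) - x"
proof -
  define S where "S = trees_below hierarchy N"
  define Hx where "Hx = (\<Sum>n. real (H n) * x ^ n)"
  have fin_S: "finite S" unfolding S_def by (rule finite_trees_below[OF hereditary_hierarchy])
  have S_hierarchies: "hierarchy t" if "t \<in> S" for t
    using that by (simp add: S_def trees_below_def)
  have partial: "(\<Prod>t\<in>S. \<Sum>j<J. (x ^ leaves t) ^ j) \<le> 1 + 2 * Hx - x" if "2 \<le> J" for J
  proof -
    define F where "F = {M \<in> bounded_msets S J. 2 \<le> size M}"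
    have fin_F: "finite F" unfolding F_def using finite_bounded_msets[OF fin_S] by simp
    have "(\<Prod>t\<in>S. \<Sum>j<J. (x ^ leaves t) ^ j)
        = 1 + (\<Sum>t\<in>S. x ^ leaves t) + (\<Sum>M\<in>F. \<Prod>t\<in>#M. x ^ leaves t)"
      using sum_prod_bounded_msets[OF fin_S, of J "\<lambda>t. x ^ leaves t"]
        sum_prod_bounded_msets_split[OF fin_S that, of "\<lambda>t. x ^ leaves t"] that
      by (simp add: F_def)
    also have "(\<Sum>M\<in>F. \<Prod>t\<in>#M. x ^ leaves t) = (\<Sum>M\<in>F. x ^ leaves (Node M))"
      by (intro sum.cong HOL.refl power_leaves_Node[symmetric]) (auto simp: F_def)
    also have "\<dots> = (\<Sum>t\<in>Node ` F. x ^ leaves t)"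
      by (simp add: sum.reindex inj_on_def)
    also have "\<dots> = (\<Sum>t\<in>insert leaf (Node ` F). x ^ leaves t) - x"
      using fin_F by (subst sum.insert) (auto simp: leaf_def F_def)
    finally have eq: "(\<Prod>t\<in>S. \<Sum>j<J. (x ^ leaves t) ^ j)
        = 1 + (\<Sum>t\<in>S. x ^ leaves t) + (\<Sum>t\<in>insert leaf (Node ` F). x ^ leaves t) - x"
      by simp
    have Node_F_hierarchies: "hierarchy t" if "t \<in> insert leaf (Node ` F)" for t
      using that S_hierarchies by (fastforce simp: F_def bounded_msets_def hierarchy_Node_iff leaf_def)
    have "(\<Sum>t\<in>S. x ^ leaves t) \<le> Hx"
      unfolding Hx_def using fin_S S_hierarchies assms by (intro sum_hierarchies_le_suminf) auto
    moreover have "(\<Sum>t\<in>insert leaf (Node ` F). x ^ leaves t) \<le> Hx"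
      unfolding Hx_def using fin_F Node_F_hierarchies assms by (intro sum_hierarchies_le_suminf) auto
    ultimately show ?thesis using eq by linarith
  qed
  have "(\<lambda>J. \<Prod>t\<in>S. \<Sum>j<J. (x ^ leaves t) ^ j) \<longlonglongrightarrow> (\<Prod>t\<in>S. 1 / (1 - x ^ leaves t))"
  proof (rule tendsto_prod)
    fix t
    have "norm (x ^ leaves t) < 1" using power_leaves_less_1[OF assms(1,2)] assms(1) by simp
    then show "(\<lambda>J. \<Sum>j<J. (x ^ leaves t) ^ j) \<longlonglongrightarrow> 1 / (1 - x ^ leaves t)"
      using geometric_sums sums_def by blast
  qed
  then have "(\<Prod>t\<in>S. 1 / (1 - x ^ leaves t)) \<le> 1 + 2 * Hx - x"
    by (rule LIMSEQ_le_const2) (use partial in auto)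
  moreover have "(\<Prod>t\<in>S. 1 / (1 - x ^ leaves t))
      = exp (tree_sum hierarchy N x + log_tail_sum hierarchy N x)"
    using prod_inverse_one_minus_eq_exp[OF fin_S, of "\<lambda>t. x ^ leaves t"] power_leaves_less_1[OF assms(1,2)]
    by (simp add: tree_sum_def log_tail_sum_def S_def sum.distrib)
  ultimately show ?thesis by (simp add: Hx_def)
qed

text \<open>Compare \<open>exp (H + R) \<le> 1 + 2 H - x\<close> with the tangent line of \<open>exp\<close> at \<open>ln 2\<close>.\<close>

lemma hierarchy_log_tail_sum_le:
  assumes "0 \<le> x" "x < 1" and summable: "summable (\<lambda>n. real (H n) * x ^ n)"
  shows "x + 2 * log_tail_sum hierarchy N x \<le> 2 * ln 2 - 1"
proof -
  define Hx where "Hx = (\<Sum>n. real (H n) * x ^ n)"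
  have bound: "x + 2 * log_tail_sum hierarchy N x \<le> 2 * ln 2 - 1 + 2 * Hx - 2 * tree_sum hierarchy N' x"
    if "N \<le> N'" for N'
  proof -
    define u where "u = tree_sum hierarchy N' x + log_tail_sum hierarchy N' x"
    have "1 + (u - ln 2) \<le> exp (u - ln 2)" by (rule exp_ge_add_one_self)
    then have "2 + 2 * tree_sum hierarchy N' x + 2 * log_tail_sum hierarchy N' x - 2 * ln 2 \<le> exp u"
      by (simp add: exp_diff u_def)
    moreover have "log_tail_sum hierarchy N x \<le> log_tail_sum hierarchy N' x"
      using that assms by (intro log_tail_sum_mono[OF hereditary_hierarchy]) auto
    moreover note exp_tree_sum_hierarchy_le[OF assms, of N', folded Hx_def u_def]
    ultimately show ?thesis by linarith
  qed
  have "(\<lambda>N'. 2 * ln 2 - 1 + 2 * Hx - 2 * tree_sum hierarchy N' x) \<longlonglongrightarrow> 2 * ln 2 - 1 + 2 * Hx - 2 * Hx"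
    unfolding tree_sum_hierarchy Hx_def by (intro tendsto_intros summable_LIMSEQ summable)
  then have "(\<lambda>N'. 2 * ln 2 - 1 + 2 * Hx - 2 * tree_sum hierarchy N' x) \<longlonglongrightarrow> 2 * ln 2 - 1"
    by simp
  then show ?thesis by (rule LIMSEQ_le_const) (use bound in auto)
qed

lemma ln_2_less_3_4: "ln 2 < (3/4 :: real)"
proof -
  have "1 + 3/4 + (3/4)\<^sup>2 / 2 \<le> exp (3/4 :: real)" by (rule exp_lower_Taylor_quadratic) simp
  then have "2 < exp (3/4 :: real)" by (simp add: power2_eq_square)
  then show ?thesis by (metis exp_gt_zero ln_exp ln_less_cancel_iff zero_less_numeral)
qed

lemma conv_radius_H_le: "conv_radius (\<lambda>n. real (H n)) \<le> ereal (2 * ln 2 - 1)"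
proof (rule ccontr)
  assume "\<not> ?thesis"
  then have "ereal (2 * ln 2 - 1) < min (conv_radius (\<lambda>n. real (H n))) 1"
    using ln_2_less_3_4 by auto
  then obtain x where "ereal (2 * ln 2 - 1) < ereal x" "ereal x < min (conv_radius (\<lambda>n. real (H n))) 1"
    using ereal_dense2 by blast
  then have x: "2 * ln 2 - 1 < x" "ereal x < min (conv_radius (\<lambda>n. real (H n))) 1" by simp_all
  have "0 \<le> x" using x(1) ln2_ge_two_thirds by simp
  moreover have "summable (\<lambda>n. real (H n) * x ^ n)"
    by (rule summable_in_conv_radius) (use x \<open>0 \<le> x\<close> in auto)
  ultimately have "x + 2 * log_tail_sum hierarchy 0 x \<le> 2 * ln 2 - 1"
    using x(2) by (intro hierarchy_log_tail_sum_le) auto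
  with x(1) show False by (simp add: log_tail_sum_def trees_below_def)
qed

lemma hierarchy_sums_below_radius:
  assumes "0 < x" and radius: "ereal x < conv_radius (\<lambda>n. real (H n))"
  shows "x + 2 * (\<Sum>n<M. real (H n) * log_tail (x ^ n)) \<le> 2 * ln 2 - 1"
    and "(\<Sum>n<N. real (H n) * x ^ n) + (\<Sum>n<M. real (H n) * log_tail (x ^ n)) \<le> ln 2"
proof -
  have "x < 1"
    using order_less_le_trans[OF radius conv_radius_H_le] ln_2_less_3_4 by simp
  have summable: "summable (\<lambda>n. real (H n) * x ^ n)"
    using summable_in_conv_radius[of x "\<lambda>n. real (H n)"] assms by simp
  have side: "x + 2 * log_tail_sum hierarchy K x \<le> 2 * ln 2 - 1" for K
    using hierarchy_log_tail_sum_le[OF _ \<open>x < 1\<close> summable] assms(1) by simp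
  then show "x + 2 * (\<Sum>n<M. real (H n) * log_tail (x ^ n)) \<le> 2 * ln 2 - 1"
    by (simp add: log_tail_sum_hierarchy)
  define R where "R = (\<Sum>n. real (H n) * log_tail (x ^ n))"
  have nonneg: "0 \<le> real (H n) * log_tail (x ^ n)" for n
    using assms(1) \<open>x < 1\<close> by (intro H_log_tail_nonneg) auto
  have bounded: "(\<Sum>n<K. real (H n) * log_tail (x ^ n)) \<le> (2 * ln 2 - 1 - x) / 2" for K
    using side[of K] by (simp add: log_tail_sum_hierarchy)
  have summable_tail: "summable (\<lambda>n. real (H n) * log_tail (x ^ n))"
    by (rule summableI_nonneg_bounded[OF nonneg bounded])
  have tail_le: "log_tail_sum hierarchy K x \<le> R" for K
    unfolding log_tail_sum_hierarchy R_def by (rule sum_le_suminf[OF summable_tail]) (use nonneg in auto)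
  have "R \<le> (2 * ln 2 - 1 - x) / 2"
    unfolding R_def by (rule suminf_le_const[OF summable_tail bounded])
  then have R_bound: "x + 2 * R \<le> 2 * ln 2 - 1" by simp
  have "0 \<le> R"
    unfolding R_def by (rule suminf_nonneg[OF summable_tail nonneg])
  have "tree_sum hierarchy N x \<le> ln 2 - R"
  proof (rule bounded_by_recursion[where K = 0 and f = "\<lambda>N. tree_sum hierarchy N x" and a = x and R = R])
    show "tree_sum hierarchy (Suc N') x \<le> x + exp (tree_sum hierarchy N' x + R) - 1 - tree_sum hierarchy N' x"
      for N'
    proof -
      have "tree_sum hierarchy (Suc N') x \<le> x
          + exp (tree_sum hierarchy N' x + log_tail_sum hierarchy N' x) - 1 - tree_sum hierarchy N' x"
        using tree_sum_Suc_le[OF hereditary_hierarchy, of x "{}" N'] assms(1) \<open>x < 1\<close> by simp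
      moreover have "exp (tree_sum hierarchy N' x + log_tail_sum hierarchy N' x)
          \<le> exp (tree_sum hierarchy N' x + R)"
        using tail_le by simp
      ultimately show ?thesis by linarith
    qed
    show "x + exp (ln 2 - R + R) - 1 - (ln 2 - R) \<le> ln 2 - R"
      using R_bound by simp
  qed (use \<open>0 \<le> R\<close> R_bound ln2_ge_two_thirds assms(1) in \<open>simp_all add: tree_sum_nonneg\<close>)
  then show "(\<Sum>n<N. real (H n) * x ^ n) + (\<Sum>n<M. real (H n) * log_tail (x ^ n)) \<le> ln 2"
    using tail_le[of M] by (simp add: tree_sum_hierarchy log_tail_sum_hierarchy)
qed

lemma hierarchy_sums_at_radius:
  assumes radius: "conv_radius (\<lambda>n. real (H n)) = ereal p" and "0 < p"
  shows "summable (\<lambda>n. real (H n) * log_tail (p ^ n))"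
    and "p + 2 * (\<Sum>n. real (H n) * log_tail (p ^ n)) \<le> 2 * ln 2 - 1"
    and "(\<Sum>n<N. real (H n) * p ^ n) + (\<Sum>n. real (H n) * log_tail (p ^ n)) \<le> ln 2"
proof -
  have "p < 1" using radius conv_radius_H_le ln_2_less_3_4 by simp
  have below: "\<forall>\<^sub>F x in at_left p. 0 < x \<and> ereal x < conv_radius (\<lambda>n. real (H n))"
    using eventually_at_left_real[OF \<open>0 < p\<close>] by eventually_elim (simp add: radius)
  have limit: "((\<lambda>x. log_tail (x ^ n)) \<longlongrightarrow> log_tail (p ^ n)) (at_left p)" for n
    using \<open>0 < p\<close> \<open>p < 1\<close> by (intro tendsto_log_tail_power tendsto_ident_at) auto
  have side: "p + 2 * (\<Sum>n<M. real (H n) * log_tail (p ^ n)) \<le> 2 * ln 2 - 1" for M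
  proof (rule tendsto_le[OF trivial_limit_at_left_real])
    show "((\<lambda>x. 2 * ln 2 - 1) \<longlongrightarrow> 2 * ln 2 - 1) (at_left p)" by simp
    show "((\<lambda>x. x + 2 * (\<Sum>n<M. real (H n) * log_tail (x ^ n)))
        \<longlongrightarrow> p + 2 * (\<Sum>n<M. real (H n) * log_tail (p ^ n))) (at_left p)"
      by (intro tendsto_intros limit)
    show "\<forall>\<^sub>F x in at_left p. x + 2 * (\<Sum>n<M. real (H n) * log_tail (x ^ n)) \<le> 2 * ln 2 - 1"
      using below by eventually_elim (use hierarchy_sums_below_radius(1) in blast)
  qed
  have sums: "(\<Sum>n<N'. real (H n) * p ^ n) + (\<Sum>n<M. real (H n) * log_tail (p ^ n)) \<le> ln 2" for N' M
  proof (rule tendsto_le[OF trivial_limit_at_left_real])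
    show "((\<lambda>x. ln 2) \<longlongrightarrow> ln 2) (at_left p)" by simp
    show "((\<lambda>x. (\<Sum>n<N'. real (H n) * x ^ n) + (\<Sum>n<M. real (H n) * log_tail (x ^ n)))
        \<longlongrightarrow> (\<Sum>n<N'. real (H n) * p ^ n) + (\<Sum>n<M. real (H n) * log_tail (p ^ n))) (at_left p)"
      by (intro tendsto_intros limit)
    show "\<forall>\<^sub>F x in at_left p.
        (\<Sum>n<N'. real (H n) * x ^ n) + (\<Sum>n<M. real (H n) * log_tail (x ^ n)) \<le> ln 2"
      using below by eventually_elim (use hierarchy_sums_below_radius(2) in blast)
  qed
  have nonneg: "0 \<le> real (H n) * log_tail (p ^ n)" for n
    using \<open>0 < p\<close> \<open>p < 1\<close> by (intro H_log_tail_nonneg) auto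
  have bounded: "(\<Sum>n<M. real (H n) * log_tail (p ^ n)) \<le> (2 * ln 2 - 1 - p) / 2" for M
    using side[of M] by simp
  show summable: "summable (\<lambda>n. real (H n) * log_tail (p ^ n))"
    by (rule summableI_nonneg_bounded[OF nonneg bounded])
  show "p + 2 * (\<Sum>n. real (H n) * log_tail (p ^ n)) \<le> 2 * ln 2 - 1"
    using suminf_le_const[OF summable bounded] by simp
  have "(\<Sum>n. real (H n) * log_tail (p ^ n)) \<le> ln 2 - (\<Sum>n<N. real (H n) * p ^ n)"
    by (rule suminf_le_const[OF summable]) (use sums[of N] in \<open>simp add: le_diff_eq add.commute\<close>)
  then show "(\<Sum>n<N. real (H n) * p ^ n) + (\<Sum>n. real (H n) * log_tail (p ^ n)) \<le> ln 2"
    by simp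
qed

lemma H_log_tail_sum_increment:
  assumes "0 \<le> p" "p \<le> y" "y \<le> 1/2"
    and summable_y2: "summable (\<lambda>n. real (H n) * (y\<^sup>2) ^ n)"
    and summable_p2: "summable (\<lambda>n. real (H n) * (p\<^sup>2) ^ n)"
    and summable_p: "summable (\<lambda>n. real (H n) * log_tail (p ^ n))"
  shows "(\<Sum>n<N. real (H n) * log_tail (y ^ n))
    \<le> (\<Sum>n. real (H n) * log_tail (p ^ n))
      + 2 * ((\<Sum>n. real (H n) * (y\<^sup>2) ^ n) - (\<Sum>n. real (H n) * (p\<^sup>2) ^ n))"
proof -
  define gap where "gap n = real (H n) * (y\<^sup>2) ^ n - real (H n) * (p\<^sup>2) ^ n" for n
  have termwise: "real (H n) * log_tail (y ^ n) \<le> real (H n) * log_tail (p ^ n) + 2 * gap n" for n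
  proof (cases "n = 0")
    case False
    have "y ^ n \<le> y" using power_decreasing[of 1 n y] False assms by simp
    moreover have "p ^ n \<le> y ^ n" using assms by (simp add: power_mono)
    ultimately have "log_tail (y ^ n) - log_tail (p ^ n) \<le> 2 * ((y ^ n)\<^sup>2 - (p ^ n)\<^sup>2)"
      using assms by (intro log_tail_diff_le) auto
    then have "real (H n) * (log_tail (y ^ n) - log_tail (p ^ n)) \<le> real (H n) * (2 * ((y\<^sup>2) ^ n - (p\<^sup>2) ^ n))"
      by (intro mult_left_mono) (simp_all flip: power_mult add: mult.commute)
    then show ?thesis by (simp add: gap_def algebra_simps)
  qed (simp add: gap_def)
  have "p\<^sup>2 \<le> y\<^sup>2" using assms by (simp add: power_mono)
  then have "(p\<^sup>2) ^ n \<le> (y\<^sup>2) ^ n" for n by (simp add: power_mono)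
  then have gap_nonneg: "0 \<le> gap n" for n by (simp add: gap_def mult_left_mono)
  have summable_gap: "summable gap"
    unfolding gap_def by (rule summable_diff[OF summable_y2 summable_p2])
  have "(\<Sum>n<N. real (H n) * log_tail (y ^ n))
      \<le> (\<Sum>n<N. real (H n) * log_tail (p ^ n)) + 2 * (\<Sum>n<N. gap n)"
    using sum_mono[of "{..<N}", OF termwise] by (simp add: sum.distrib sum_distrib_left)
  also have "\<dots> \<le> (\<Sum>n. real (H n) * log_tail (p ^ n)) + 2 * (\<Sum>n. gap n)"
    using assms
    by (intro add_mono mult_left_mono sum_le_suminf summable_p summable_gap gap_nonneg H_log_tail_nonneg) auto
  also have "(\<Sum>n. gap n) = (\<Sum>n. real (H n) * (y\<^sup>2) ^ n) - (\<Sum>n. real (H n) * (p\<^sup>2) ^ n)"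
    unfolding gap_def by (rule suminf_diff[OF summable_y2 summable_p2, symmetric])
  finally show ?thesis .
qed

text \<open>Since \<open>p\<^sup>2 < p\<close>, the series \<open>H\<close> is continuous at \<open>p\<^sup>2\<close>; by \<open>log_tail_diff_le\<close> the tail
  sum therefore grows by at most \<open>p ^ m / 4\<close> when \<open>p\<close> is replaced by a nearby \<open>y > p\<close>,
  which is paid for by the slack \<open>p ^ m\<close> coming from \<open>H m \<ge> 1\<close>.\<close>

lemma point_beyond_radius:
  assumes radius: "conv_radius (\<lambda>n. real (H n)) = ereal p" and "0 < p" "p < 1/2"
    and summable: "summable (\<lambda>n. real (H n) * log_tail (p ^ n))"
    and side: "p + 2 * (\<Sum>n. real (H n) * log_tail (p ^ n)) \<le> 2 * ln 2 - 1"
    and head: "(\<Sum>n<m. real (H n) * p ^ n) + (\<Sum>n. real (H n) * log_tail (p ^ n)) \<le> ln 2 - p ^ m"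
  obtains y R where "p < y" "y < 1/2" "0 \<le> R"
    and "\<And>N. (\<Sum>n<N. real (H n) * log_tail (y ^ n)) \<le> R"
    and "y - y ^ m + 2 * R \<le> 2 * ln 2 - 1"
    and "(\<Sum>n<m. real (H n) * y ^ n) \<le> ln 2 - R"
proof -
  define Rp where "Rp = (\<Sum>n. real (H n) * log_tail (p ^ n))"
  define G where "G z = (\<Sum>n. real (H n) * z ^ n)" for z
  define eps where "eps = p ^ m / 8"
  define K where "K = (p\<^sup>2 + p) / 2"
  have "p\<^sup>2 < p" using \<open>0 < p\<close> \<open>p < 1/2\<close> by (simp add: power2_eq_square)
  then have K: "p\<^sup>2 < K" "K < p" "0 < K" using \<open>0 < p\<close> by (auto simp: K_def add_nonneg_pos)
  have summable_below: "summable (\<lambda>n. real (H n) * z ^ n)" if "0 \<le> z" "z < p" for z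
    using that radius by (intro summable_in_conv_radius) simp
  have "isCont G (p\<^sup>2)"
    unfolding G_def using K by (intro isCont_powser[OF summable_below[of K]]) auto
  then have "((\<lambda>y. G (y\<^sup>2)) \<longlongrightarrow> G (p\<^sup>2)) (at_right p)"
    by (intro isCont_tendsto_compose[where g = G] tendsto_intros)
  moreover have "((\<lambda>y. y\<^sup>2) \<longlongrightarrow> p\<^sup>2) (at_right p)"
    and "((\<lambda>y. y) \<longlongrightarrow> p) (at_right p)"
    and "((\<lambda>y. \<Sum>n<m. real (H n) * y ^ n) \<longlongrightarrow> (\<Sum>n<m. real (H n) * p ^ n)) (at_right p)"
    by (intro tendsto_intros)+
  moreover have "0 < eps" "0 < p ^ m / 2" using \<open>0 < p\<close> by (simp_all add: eps_def)
  ultimately have "\<forall>\<^sub>F y in at_right p. G (y\<^sup>2) < G (p\<^sup>2) + eps \<and> y\<^sup>2 < K \<and> y < p + p ^ m / 2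
      \<and> (\<Sum>n<m. real (H n) * y ^ n) < (\<Sum>n<m. real (H n) * p ^ n) + p ^ m / 2"
    using K by (intro eventually_conj order_tendstoD(2)) auto
  moreover have "\<forall>\<^sub>F y in at_right p. y \<in> {p<..<1/2}"
    using eventually_at_right_real[OF \<open>p < 1/2\<close>] .
  ultimately have "\<forall>\<^sub>F y in at_right p. (G (y\<^sup>2) < G (p\<^sup>2) + eps \<and> y\<^sup>2 < K \<and> y < p + p ^ m / 2
      \<and> (\<Sum>n<m. real (H n) * y ^ n) < (\<Sum>n<m. real (H n) * p ^ n) + p ^ m / 2) \<and> y \<in> {p<..<1/2}"
    by (rule eventually_conj)
  then have "\<exists>y. (G (y\<^sup>2) < G (p\<^sup>2) + eps \<and> y\<^sup>2 < K \<and> y < p + p ^ m / 2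
      \<and> (\<Sum>n<m. real (H n) * y ^ n) < (\<Sum>n<m. real (H n) * p ^ n) + p ^ m / 2) \<and> y \<in> {p<..<1/2}"
    by (rule eventually_happens'[OF trivial_limit_at_right_real])
  then obtain y where y: "p < y" "y < 1/2" "G (y\<^sup>2) < G (p\<^sup>2) + eps" "y\<^sup>2 < K"
      "y < p + p ^ m / 2" "(\<Sum>n<m. real (H n) * y ^ n) < (\<Sum>n<m. real (H n) * p ^ n) + p ^ m / 2"
    by auto
  show ?thesis
  proof
    show "p < y" "y < 1/2" by (fact y)+
    have "0 \<le> real (H n) * log_tail (p ^ n)" for n
      using \<open>0 < p\<close> \<open>p < 1/2\<close> by (intro H_log_tail_nonneg) auto
    then show "0 \<le> Rp + 2 * eps"
      using \<open>0 < eps\<close> unfolding Rp_def by (simp add: suminf_nonneg[OF summable])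
    show "(\<Sum>n<N. real (H n) * log_tail (y ^ n)) \<le> Rp + 2 * eps" for N
    proof -
      have "0 \<le> y\<^sup>2" "y\<^sup>2 < p" "0 \<le> p\<^sup>2" "p\<^sup>2 < p" using y K by auto
      then have "(\<Sum>n<N. real (H n) * log_tail (y ^ n)) \<le> Rp + 2 * (G (y\<^sup>2) - G (p\<^sup>2))"
        unfolding Rp_def G_def using \<open>0 < p\<close> y
        by (intro H_log_tail_sum_increment summable summable_below) auto
      with y(3) show ?thesis by simp
    qed
    have "p ^ m \<le> y ^ m" using \<open>0 < p\<close> y by (simp add: power_mono)
    then show "y - y ^ m + 2 * (Rp + 2 * eps) \<le> 2 * ln 2 - 1"
      using side y(5) unfolding Rp_def eps_def by simp
    show "(\<Sum>n<m. real (H n) * y ^ n) \<le> ln 2 - (Rp + 2 * eps)"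
      using head y(6) \<open>0 < eps\<close> unfolding Rp_def eps_def by simp
  qed
qed

section \<open>Avoiding a subhierarchy\<close>

lemma tree_sum_avoiding:
  "tree_sum (\<lambda>t. hierarchy t \<and> \<not> contains_sub t T) N y = (\<Sum>n<N. real (H_avoid T n) * y ^ n)"
  using sum_trees_below_by_leaves[OF hereditary_avoiding[of T], where N = N and g = "\<lambda>n. y ^ n"]
  by (simp add: tree_sum_def H_avoid_def conj_ac)

lemma summable_avoiding:
  assumes T: "hierarchy T" "leaves T = m" "2 \<le> m"
    and "0 < y" "y < 1" "0 \<le> R"
    and tail: "\<And>N. (\<Sum>n<N. real (H n) * log_tail (y ^ n)) \<le> R"
    and fixpoint: "y - y ^ m + 2 * R \<le> 2 * ln 2 - 1"
    and start: "(\<Sum>n<m. real (H n) * y ^ n) \<le> ln 2 - R"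
  shows "summable (\<lambda>n. real (H_avoid T n) * y ^ n)"
proof -
  define P where "P t \<longleftrightarrow> hierarchy t \<and> \<not> contains_sub t T" for t
  have P: "hereditary P" unfolding P_def by (rule hereditary_avoiding)
  have P_hierarchy: "P t \<Longrightarrow> hierarchy t" for t by (simp add: P_def)
  define C where "C = children T"
  have T_eq: "T = Node C" by (simp add: C_def)
  with T have "C \<noteq> {#}" by auto
  with T T_eq have size_C: "2 \<le> size C" by (simp add: two_le_size_if_hierarchy)
  \<comment> \<open>\<open>T\<close> itself is not \<open>T\<close>-avoiding, so its children are a forbidden multiset at every level.\<close>
  have excluded: "{C} \<subseteq> {M \<in> bounded_msets (trees_below P N) (N + 2). 2 \<le> size M \<and> \<not> P (Node M)}"
    if "m \<le> N" for N
  proof -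
    have "x \<in> trees_below P N" if x: "x \<in># C" for x
    proof -
      have "leaves x < m" using leaves_child_less[OF size_C x] T T_eq by simp
      moreover have "\<not> contains_sub x T"
        using leaves_le_if_subtree_of[of T x] \<open>leaves x < m\<close> T by (auto simp: contains_sub_def)
      ultimately show ?thesis
        using T T_eq x \<open>m \<le> N\<close> by (auto simp: P_def trees_below_def hierarchy_Node_iff)
    qed
    moreover have "count C x < N + 2" for x
      using count_le_leaves[of C x] T T_eq \<open>m \<le> N\<close> by simp
    moreover have "\<not> P (Node C)"
      using T_eq by (simp add: P_def contains_sub_def subtree_of.refl)
    ultimately show ?thesis using size_C by (auto simp: bounded_msets_def)
  qed
  have bound: "tree_sum P N y \<le> ln 2 - R" if "m \<le> N" for N
  proof (rule bounded_by_recursion[where K = m and f = "\<lambda>N. tree_sum P N y" and a = "y - y ^ m" and R = R])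
    show "tree_sum P (Suc N') y \<le> y - y ^ m + exp (tree_sum P N' y + R) - 1 - tree_sum P N' y"
      if "m \<le> N'" for N'
    proof -
      have "log_tail_sum P N' y \<le> log_tail_sum hierarchy N' y"
        using \<open>0 < y\<close> \<open>y < 1\<close> by (intro log_tail_sum_mono[OF hereditary_hierarchy P_hierarchy]) auto
      also have "\<dots> \<le> R"
        using tail[of N'] by (simp add: log_tail_sum_hierarchy)
      finally have "exp (tree_sum P N' y + log_tail_sum P N' y) \<le> exp (tree_sum P N' y + R)"
        by simp
      moreover have "tree_sum P (Suc N') y
          \<le> y + exp (tree_sum P N' y + log_tail_sum P N' y) - 1 - tree_sum P N' y - y ^ m"
        using tree_sum_Suc_le[OF P _ _ excluded[OF that]] \<open>0 < y\<close> \<open>y < 1\<close> T T_eq by simp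
      ultimately show ?thesis by linarith
    qed
    have "tree_sum P m y \<le> tree_sum hierarchy m y"
      using \<open>0 < y\<close> by (intro tree_sum_mono[OF hereditary_hierarchy P_hierarchy]) auto
    then show "tree_sum P m y \<le> ln 2 - R"
      using start by (simp add: tree_sum_hierarchy)
    show "y - y ^ m + exp (ln 2 - R + R) - 1 - (ln 2 - R) \<le> ln 2 - R"
      using fixpoint by simp
  qed (use \<open>0 < y\<close> \<open>0 \<le> R\<close> that in \<open>simp_all add: tree_sum_nonneg\<close>)
  have "(\<Sum>n<N. real (H_avoid T n) * y ^ n) \<le> ln 2" for N
  proof -
    have "tree_sum P N y \<le> tree_sum P (max N m) y"
      using \<open>0 < y\<close> by (intro tree_sum_mono[OF P]) auto
    with bound[of "max N m"] \<open>0 \<le> R\<close> show ?thesis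
      using tree_sum_avoiding[of T N y] unfolding P_def by simp
  qed
  then show ?thesis
    by (intro summableI_nonneg_bounded[where x = "ln 2"]) (use \<open>0 < y\<close> in auto)
qed

theorem theorem3p3:
  fixes T :: tree and m :: nat
  assumes "m \<ge> 2" and "hierarchy T" and "leaves T = m"
  shows "conv_radius (\<lambda>n. real (H n)) < conv_radius (\<lambda>n. real (H_avoid T n))"
proof -
  obtain p where radius: "conv_radius (\<lambda>n. real (H n)) = ereal p"
    using conv_radius_H_ge conv_radius_H_le by (cases "conv_radius (\<lambda>n. real (H n))") auto
  have "0 < p" "p < 1/2"
    using conv_radius_H_ge conv_radius_H_le ln_2_less_3_4 unfolding radius by auto
  note at_radius = hierarchy_sums_at_radius[OF radius \<open>0 < p\<close>]
  have "p ^ m \<le> real (H m) * p ^ m"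
    using H_pos[OF assms(2)] assms(3) \<open>0 < p\<close> by simp
  then have head: "(\<Sum>n<m. real (H n) * p ^ n) + (\<Sum>n. real (H n) * log_tail (p ^ n)) \<le> ln 2 - p ^ m"
    using at_radius(3)[of "Suc m"] by simp
  obtain y R where "p < y" "y < 1/2" "0 \<le> R"
    and "\<And>N. (\<Sum>n<N. real (H n) * log_tail (y ^ n)) \<le> R"
    and "y - y ^ m + 2 * R \<le> 2 * ln 2 - 1"
    and "(\<Sum>n<m. real (H n) * y ^ n) \<le> ln 2 - R"
    using point_beyond_radius[OF radius \<open>0 < p\<close> \<open>p < 1/2\<close> at_radius(1,2) head] by blast
  then have "summable (\<lambda>n. real (H_avoid T n) * y ^ n)"
    using \<open>0 < p\<close> by (intro summable_avoiding[OF assms(2,3,1)]) auto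
  from conv_radius_geI[OF this] have "ereal y \<le> conv_radius (\<lambda>n. real (H_avoid T n))"
    using \<open>0 < p\<close> \<open>p < y\<close> by simp
  moreover have "ereal p < ereal y" using \<open>p < y\<close> by simp
  ultimately show ?thesis unfolding radius by (rule order_less_le_trans[rotated])
qed

end
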